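(* Consider $(\mathbb R^2,d_{\rm e},\mu)$ with $\mu=\lambda_1+\lambda_2$, where $\lambda_1$ is one-dimensional Lebesgue measure on the segment $A=[0,1]\times\{0\}$ and $\lambda_2$ is two-dimensional Lebesgue measure on $\mathbb R^2$. Then there exists $f\in L^1(\mu)$ with compact support such that $\{x\in\mathbb R^2:\mathcal Mf(x)=\infty\}=A$. In particular the noncentered maximal operator $\mathcal M$ does not possess the dichotomy property for this space.
   Context: $d_{\rm e}$ is the Euclidean metric. $\mathcal Mf(x)=\sup_{B\ni x}\mu(B)^{-1}\int_B|f|d\mu$, the supremum over open Euclidean balls $B$ containing $x$. $\mathcal M$ possesses the dichotomy property if for every $f$ integrable on every ball either $\mu(\{\mathcal Mf=\infty\})=0$ or $\mathcal Mf\equiv\infty$. *)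

theory Defs
  imports "HOL-Analysis.Analysis"
begin

text \<open>The plane R^2 is modelled as real \<times> real; its metric (dist) is the Euclidean one.\<close>

definition segA :: "(real \<times> real) set" where
  "segA = (\<lambda>t. (t, 0)) ` {0..1}"

definition lambda1 :: "(real \<times> real) measure" where
  "lambda1 = distr (restrict_space lborel {0..1}) borel (\<lambda>t::real. (t, 0::real))"

definition mu :: "(real \<times> real) measure" where
  "mu = measure_of UNIV (sets borel)
          (\<lambda>S. emeasure (lborel :: (real \<times> real) measure) S + emeasure lambda1 S)"

definition maxfun :: "('a::metric_space) measure \<Rightarrow> ('a \<Rightarrow> real) \<Rightarrow> 'a \<Rightarrow> ennreal" where
  "maxfun M f x = (SUP cr \<in> {(c, r). 0 < r \<and> x \<in> ball c r}.
      (\<integral>\<^sup>+ y \<in> ball (fst cr) (snd cr). ennreal \<bar>f y\<bar> \<partial>M) / emeasure M (ball (fst cr) (snd cr)))"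

definition dichotomy :: "('a::metric_space) measure \<Rightarrow> bool" where
  "dichotomy M \<longleftrightarrow> (\<forall>f. (\<forall>c r. set_integrable M (ball c r) f) \<longrightarrow>
      emeasure M {x \<in> space M. maxfun M f x = \<infinity>} = 0 \<or> (\<forall>x. maxfun M f x = \<infinity>))"

end

theory Submission
  imports Defs
begin

text \<open>
  Take f(y) = 1 / sqrt y2 on [0,1] x (0,1] and f = 0 elsewhere. It is planar Lebesgue
  integrable and vanishes on A, so f is in L1(mu). Off A, f is bounded near the point while balls
  of radius rho have mu-measure at least pi rho^2, so Mf is finite there. A point of A lies in the
  ball of radius r centred sqrt(r^2 - r^4) above it; this ball meets A only in an interval of
  length at most 2 r^2, hence has mu-measure at most 6 r^2, yet contains a rectangle of area
  r^2/4 on which f >= 1 / sqrt (2 r). Its average is thus of order r^(-1/2), and Mf is infinite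
  on A. Since mu(A) = 1, the dichotomy fails.
\<close>

lemma nn_integral_sum_measure:
  assumes sets_L: "sets L = sets M" and sets_N: "sets N = sets M"
    and emeasure_L: "\<And>A. A \<in> sets M \<Longrightarrow> emeasure L A = emeasure M A + emeasure N A"
    and "f \<in> borel_measurable M"
  shows "integral\<^sup>N L f = integral\<^sup>N M f + integral\<^sup>N N f"
proof -
  have space: "space L = space M" "space N = space M"
    using sets_L sets_N by (auto dest: sets_eq_imp_space_eq)
  have meas: "g \<in> borel_measurable L" "g \<in> borel_measurable N" if "g \<in> borel_measurable M" for g
    using that sets_L sets_N by (auto cong: measurable_cong_sets)
  show ?thesis
    using \<open>f \<in> borel_measurable M\<close>
  proof (induction rule: borel_measurable_induct)
    case (cong f g)
    then show ?case
      using space by (metis (no_types, lifting) nn_integral_cong)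
  next
    case (set A)
    then show ?case
      using sets_L sets_N by (simp add: emeasure_L)
  next
    case (mult u c)
    then show ?case
      by (simp add: meas nn_integral_cmult distrib_left)
  next
    case (add u v)
    then show ?case
      by (simp add: meas nn_integral_add add_ac)
  next
    case (seq U)
    have mono: "incseq (\<lambda>i. integral\<^sup>N K (U i))" for K
      using \<open>incseq U\<close> by (auto simp: incseq_def le_fun_def intro!: nn_integral_mono)
    have "integral\<^sup>N L (\<lambda>x. SUP i. U i x) = (SUP i. integral\<^sup>N L (U i))"
      using seq by (intro nn_integral_monotone_convergence_SUP meas)
    also have "\<dots> = (SUP i. integral\<^sup>N M (U i)) + (SUP i. integral\<^sup>N N (U i))"
      using seq mono by (simp add: ennreal_SUP_add)
    also have "\<dots> = integral\<^sup>N M (\<lambda>x. SUP i. U i x) + integral\<^sup>N N (\<lambda>x. SUP i. U i x)"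
      using seq by (simp add: nn_integral_monotone_convergence_SUP meas)
    finally show ?case
      by (simp add: SUP_apply[symmetric])
  qed
qed

lemma ennreal_divide_ge:
  fixes a b :: ennreal
  assumes "ennreal A \<le> a" "b \<le> ennreal B" "0 < b" "0 \<le> A"
  shows "ennreal (A / B) \<le> a / b"
proof -
  obtain b' where b': "b = ennreal b'" "0 < b'" "b' \<le> B"
    using assms(2,3) by (cases b) (auto simp: ennreal_le_iff2 top_unique)
  have "ennreal (A / B) \<le> ennreal (A / b')"
    using b' assms(4) by (intro ennreal_leI divide_left_mono) auto
  also have "\<dots> = ennreal A / b"
    using b' assms(4) by (simp add: divide_ennreal)
  also have "\<dots> \<le> a / b"
    using assms(1) by (rule divide_right_mono_ennreal)
  finally show ?thesis .
qed

lemma maxfun_ge_ball_average: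
  assumes "x \<in> ball c r"
  shows "(\<integral>\<^sup>+ y \<in> ball c r. ennreal \<bar>f y\<bar> \<partial>M) / emeasure M (ball c r) \<le> maxfun M f x"
proof -
  have "0 < r"
    using assms by (metis mem_ball zero_le_dist le_less_trans)
  then show ?thesis
    unfolding maxfun_def using assms by (intro SUP_upper2[where i = "(c, r)"]) auto
qed

lemma ball_subset_ball_double:
  fixes x c :: "'a::metric_space"
  assumes "x \<in> ball c r"
  shows "ball c r \<subseteq> ball x (2 * r)"
proof
  fix y assume "y \<in> ball c r"
  have "dist x y \<le> dist x c + dist c y"
    by (rule dist_triangle)
  also have "\<dots> < 2 * r"
    using assms \<open>y \<in> ball c r\<close> by (simp add: dist_commute)
  finally show "y \<in> ball x (2 * r)"
    by simp
qed

lemma maxfun_finite_if_locally_bounded: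
  fixes M :: "'a::metric_space measure"
  assumes sets_M: "sets M = sets borel"
    and integral_finite: "(\<integral>\<^sup>+ y. ennreal \<bar>f y\<bar> \<partial>M) < \<infinity>"
    and "0 < \<delta>" and bounded: "\<And>y. y \<in> ball x \<delta> \<Longrightarrow> \<bar>f y\<bar> \<le> K"
    and large_balls: "\<And>\<rho>. 0 < \<rho> \<Longrightarrow> \<exists>m>0. \<forall>c r. \<rho> \<le> r \<longrightarrow> ennreal m \<le> emeasure M (ball c r)"
  shows "maxfun M f x < \<infinity>"
proof -
  obtain I where I: "(\<integral>\<^sup>+ y. ennreal \<bar>f y\<bar> \<partial>M) = ennreal I" "0 \<le> I"
    using integral_finite by (cases "\<integral>\<^sup>+ y. ennreal \<bar>f y\<bar> \<partial>M") auto
  obtain m where "0 < m" and m: "\<And>c r. \<delta> / 2 \<le> r \<Longrightarrow> ennreal m \<le> emeasure M (ball c r)"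
    using large_balls[of "\<delta> / 2"] \<open>0 < \<delta>\<close> by auto
  have "0 \<le> K"
    using bounded[of x] \<open>0 < \<delta>\<close> by auto
  have "maxfun M f x \<le> ennreal (max K (I / m))"
    unfolding maxfun_def
  proof (rule SUP_least, clarify)
    fix c r assume "0 < r" and x: "x \<in> ball c r"
    let ?B = "ball c r"
    obtain m' where "0 < m'" "ennreal m' \<le> emeasure M ?B"
      using large_balls[OF \<open>0 < r\<close>] by blast
    then have "0 < emeasure M ?B"
      using ennreal_less_zero_iff less_le_trans by blast
    moreover have "(\<integral>\<^sup>+ y \<in> ?B. ennreal \<bar>f y\<bar> \<partial>M) \<le> emeasure M ?B * ennreal (max K (I / m))"
    proof (cases "r < \<delta> / 2")
      case True
      have "?B \<subseteq> ball x \<delta>"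
        using ball_subset_ball_double[OF x] True by auto
      then have "(\<integral>\<^sup>+ y \<in> ?B. ennreal \<bar>f y\<bar> \<partial>M) \<le> (\<integral>\<^sup>+ y. ennreal K * indicator ?B y \<partial>M)"
        using bounded by (intro nn_integral_mono) (auto simp: indicator_def subset_eq ennreal_leI)
      also have "\<dots> = ennreal K * emeasure M ?B"
        using sets_M by (simp add: nn_integral_cmult_indicator)
      also have "\<dots> \<le> emeasure M ?B * ennreal (max K (I / m))"
        unfolding mult.commute[of "ennreal K"] by (intro mult_left_mono ennreal_leI) auto
      finally show ?thesis .
    next
      case False
      have "(\<integral>\<^sup>+ y \<in> ?B. ennreal \<bar>f y\<bar> \<partial>M) \<le> ennreal I"
        unfolding I(1)[symmetric] by (intro nn_integral_mono) (simp add: indicator_def)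
      also have "\<dots> = ennreal m * ennreal (I / m)"
        using \<open>0 < m\<close> \<open>0 \<le> I\<close> by (simp flip: ennreal_mult)
      also have "\<dots> \<le> emeasure M ?B * ennreal (max K (I / m))"
        using False by (intro mult_mono m ennreal_leI) auto
      finally show ?thesis .
    qed
    ultimately show "(\<integral>\<^sup>+ y \<in> ball (fst (c, r)) (snd (c, r)). ennreal \<bar>f y\<bar> \<partial>M)
        / emeasure M (ball (fst (c, r)) (snd (c, r))) \<le> ennreal (max K (I / m))"
      by (simp only: fst_conv snd_conv divide_le_posI_ennreal)
  qed
  then show ?thesis
    by (simp add: le_less_trans)
qed

lemma emeasure_lborel_ball_plane:
  fixes c :: "real \<times> real"
  assumes "0 \<le> r"
  shows "emeasure lborel (ball c r) = ennreal (pi * r^2)"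
  using emeasure_ball[OF assms, of c] by (simp add: unit_ball_vol_numeral power2_eq_square)

lemma emeasure_lborel_Icc_times_Icc:
  fixes a b c d :: real
  assumes "a \<le> b" "c \<le> d"
  shows "emeasure lborel ({a..b} \<times> {c..d}) = ennreal ((b - a) * (d - c))"
proof -
  have "emeasure lborel ({a..b} \<times> {c..d}) = emeasure (lborel \<Otimes>\<^sub>M lborel) ({a..b} \<times> {c..d})"
    by (simp add: lborel_prod)
  also have "\<dots> = emeasure lborel {a..b} * emeasure lborel {c..d}"
    by (rule lborel.emeasure_pair_measure_Times) auto
  finally show ?thesis
    using assms by (simp add: ennreal_mult)
qed

lemma Icc_times_Icc_subset_ball:
  fixes s h u v r :: real
  assumes "u^2 + v^2 < r^2" "0 < r"
  shows "{s - u .. s + u} \<times> {h - v .. h + v} \<subseteq> ball (s, h) r"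
proof
  fix y assume "y \<in> {s - u .. s + u} \<times> {h - v .. h + v}"
  then have "s - u \<le> fst y" "fst y \<le> s + u" "h - v \<le> snd y" "snd y \<le> h + v"
    by auto
  then have "\<bar>s - fst y\<bar> \<le> u" "\<bar>h - snd y\<bar> \<le> v"
    by arith+
  then have "(s - fst y)^2 \<le> u^2" "(h - snd y)^2 \<le> v^2"
    using power_mono[of "\<bar>_\<bar>" _ 2] by (metis abs_ge_zero power2_abs)+
  then have "sqrt ((s - fst y)^2 + (h - snd y)^2) < sqrt (r^2)"
    using assms(1) by (intro real_sqrt_less_mono) linarith
  then show "y \<in> ball (s, h) r"
    using assms(2) by (cases y) (simp add: dist_Pair_Pair dist_real_def)
qed

lemma sets_lambda1 [simp]: "sets lambda1 = sets borel"
  by (simp add: lambda1_def)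

lemma emeasure_lambda1:
  assumes "B \<in> sets borel"
  shows "emeasure lambda1 B = emeasure lborel {t \<in> {0..1}. (t, 0) \<in> B}"
proof -
  have "(\<lambda>t::real. (t, 0::real)) \<in> restrict_space lborel {0..1} \<rightarrow>\<^sub>M borel"
    by (intro measurable_restrict_space1) simp
  then have "emeasure lambda1 B = emeasure lborel ((\<lambda>t. (t, 0)) -` B \<inter> {0..1})"
    unfolding lambda1_def using assms by (simp add: emeasure_distr emeasure_restrict_space)
  also have "(\<lambda>t. (t, 0)) -` B \<inter> {0..1} = {t \<in> {0..1}. (t, 0) \<in> B}"
    by auto
  finally show ?thesis .
qed

lemma emeasure_lambda1_ball_le:
  "emeasure lambda1 (ball c r) \<le> ennreal (2 * sqrt (r^2 - (snd c)^2))"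
proof -
  define w where "w = sqrt (r^2 - (snd c)^2)"
  have "{t \<in> {0..1}. (t, 0) \<in> ball c r} \<subseteq> {fst c - w .. fst c + w}"
  proof
    fix t assume "t \<in> {t \<in> {0..1}. (t, 0) \<in> ball c r}"
    then have "dist c (t, 0) ^ 2 < r ^ 2"
      by (intro power_strict_mono) auto
    moreover have "dist c (t, 0) ^ 2 = \<bar>fst c - t\<bar>^2 + (snd c)^2"
      by (cases c) (simp add: dist_Pair_Pair dist_real_def)
    ultimately have "\<bar>fst c - t\<bar>^2 < r^2 - (snd c)^2"
      by linarith
    then have "\<bar>fst c - t\<bar> < w"
      unfolding w_def by (rule real_less_rsqrt)
    then show "t \<in> {fst c - w .. fst c + w}"
      by auto
  qed
  then have "emeasure lambda1 (ball c r) \<le> emeasure lborel {fst c - w .. fst c + w}"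
    by (simp add: emeasure_lambda1 emeasure_mono)
  also have "\<dots> \<le> ennreal (2 * w)"
    by (simp add: emeasure_lborel_Icc_eq)
  finally show ?thesis
    unfolding w_def .
qed

lemma sets_mu [simp]: "sets mu = sets borel"
  unfolding mu_def
  by (simp add: sigma_algebra.sets_measure_of_eq[OF sets.sigma_algebra_axioms[of borel, unfolded space_borel]])

lemma space_mu [simp]: "space mu = UNIV"
  unfolding mu_def by simp

lemma emeasure_mu:
  assumes "S \<in> sets borel"
  shows "emeasure mu S = emeasure lborel S + emeasure lambda1 S"
proof -
  have "countably_additive (sets borel) (\<lambda>S. emeasure lborel S + emeasure lambda1 S)"
    by (auto simp: countably_additive_def suminf_add[OF summableI summableI, symmetric] suminf_emeasure)
  then show ?thesis
    unfolding mu_def using assms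
    by (intro emeasure_measure_of_sigma[OF sets.sigma_algebra_axioms[of borel, unfolded space_borel]])
       (auto simp: positive_def)
qed

lemma nn_integral_mu:
  "f \<in> borel_measurable borel \<Longrightarrow> integral\<^sup>N mu f = integral\<^sup>N lborel f + integral\<^sup>N lambda1 f"
  by (rule nn_integral_sum_measure) (auto simp: emeasure_mu)

lemma emeasure_mu_ball_ge:
  assumes "0 \<le> r"
  shows "ennreal (pi * r^2) \<le> emeasure mu (ball c r)"
  using assms by (simp add: emeasure_mu emeasure_lborel_ball_plane)

lemma emeasure_mu_ball_le:
  assumes "\<bar>snd c\<bar> \<le> r"
  shows "emeasure mu (ball c r) \<le> ennreal (pi * r^2 + 2 * sqrt (r^2 - (snd c)^2))"
proof -
  have "emeasure mu (ball c r) \<le> ennreal (pi * r^2) + ennreal (2 * sqrt (r^2 - (snd c)^2))"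
    using assms by (simp add: emeasure_mu emeasure_lborel_ball_plane emeasure_lambda1_ball_le add_left_mono)
  moreover have "(snd c)^2 \<le> r^2"
    using power_mono[OF assms, of 2] by simp
  ultimately show ?thesis
    by (simp add: ennreal_plus)
qed

lemma segA_eq_Times: "segA = {0..1} \<times> {0}"
  by (auto simp: segA_def)

lemma closed_segA: "closed segA"
  unfolding segA_eq_Times by (intro closed_Times) auto

lemma emeasure_mu_segA: "emeasure mu segA = 1"
proof -
  have "emeasure lborel segA = 0"
    using emeasure_lborel_Icc_times_Icc[of 0 1 0 0] by (simp add: segA_eq_Times)
  moreover have "{t \<in> {0..1}. (t, 0) \<in> segA} = {0..1::real}"
    by (auto simp: segA_eq_Times)
  ultimately show ?thesis
    using closed_segA by (simp add: emeasure_mu emeasure_lambda1)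
qed

definition inv_sqrt_height :: "real \<times> real \<Rightarrow> real" where
  "inv_sqrt_height y =
     (if 0 \<le> fst y \<and> fst y \<le> 1 \<and> 0 < snd y \<and> snd y \<le> 1 then 1 / sqrt (snd y) else 0)"

lemma inv_sqrt_height_nonneg: "0 \<le> inv_sqrt_height y"
  by (simp add: inv_sqrt_height_def)

lemma inv_sqrt_height_split:
  "inv_sqrt_height (a, b) = indicator {0..1} a * (indicator {0<..1} b * b powr (-1/2))"
  by (simp add: inv_sqrt_height_def indicator_def powr_minus_divide powr_half_sqrt)

lemma borel_measurable_inv_sqrt_height [measurable]: "inv_sqrt_height \<in> borel_measurable borel"
proof -
  have eq: "inv_sqrt_height =
      (\<lambda>y. indicator {0..1} (fst y) * (indicator {0<..1} (snd y) * snd y powr (-1/2)))"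
    by (auto simp: fun_eq_iff inv_sqrt_height_split split_paired_all)
  show ?thesis
    unfolding eq borel_prod[symmetric] by measurable
qed

lemma nn_integral_indicator_powr_minus_half_finite:
  "(\<integral>\<^sup>+ b. ennreal (indicator {0<..1} b * b powr (-1/2)) \<partial>lborel) < \<infinity>"
proof -
  have "integrable lebesgue (\<lambda>b. indicator {0<..1} b *\<^sub>R b powr (-1/2::real))"
    by (intro nonnegative_absolutely_integrable_1 [unfolded set_integrable_def]
        integrable_on_powr_from_0') auto
  then have "integrable lborel (\<lambda>b. indicator {0<..1} b * b powr (-1/2::real))"
    by (simp add: integrable_completion)
  then show ?thesis
    by (auto dest: integrableD(2) simp: less_top)
qed

lemma nn_integral_inv_sqrt_height_lborel_finite:
  "(\<integral>\<^sup>+ y. ennreal (inv_sqrt_height y) \<partial>lborel) < \<infinity>"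
proof -
  let ?g = "\<lambda>b::real. ennreal (indicator {0<..1} b * b powr (-1/2))"
  have split: "ennreal (inv_sqrt_height (a, b)) = indicator {0..1} a * ?g b" for a b
    by (simp add: inv_sqrt_height_split indicator_def)
  have "(\<integral>\<^sup>+ y. ennreal (inv_sqrt_height y) \<partial>lborel)
      = (\<integral>\<^sup>+ y. ennreal (inv_sqrt_height y) \<partial>(lborel \<Otimes>\<^sub>M lborel))"
    by (simp add: lborel_prod)
  also have "\<dots> = (\<integral>\<^sup>+ a. \<integral>\<^sup>+ b. ennreal (inv_sqrt_height (a, b)) \<partial>lborel \<partial>lborel)"
    by (rule lborel.nn_integral_fst[symmetric]) (simp add: lborel_prod)
  also have "\<dots> = (\<integral>\<^sup>+ a. \<integral>\<^sup>+ b. indicator {0..1::real} a * ?g b \<partial>lborel \<partial>lborel)"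
    by (simp only: split)
  also have "\<dots> = (\<integral>\<^sup>+ a. indicator {0..1::real} a * (\<integral>\<^sup>+ b. ?g b \<partial>lborel) \<partial>lborel)"
    by (simp add: nn_integral_cmult)
  also have "\<dots> = (\<integral>\<^sup>+ b. ?g b \<partial>lborel)"
    by (simp add: nn_integral_multc mult.commute)
  finally show ?thesis
    using nn_integral_indicator_powr_minus_half_finite by simp
qed

lemma nn_integral_inv_sqrt_height_lambda1: "(\<integral>\<^sup>+ y. ennreal (inv_sqrt_height y) \<partial>lambda1) = 0"
proof -
  have "inv_sqrt_height (t, 0) = 0" for t
    by (simp add: inv_sqrt_height_def)
  then show ?thesis
    unfolding lambda1_def by (subst nn_integral_distr) (auto intro: measurable_restrict_space1)
qed

lemma nn_integral_inv_sqrt_height_mu_finite: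
  "(\<integral>\<^sup>+ y. ennreal (inv_sqrt_height y) \<partial>mu) < \<infinity>"
  using nn_integral_inv_sqrt_height_lborel_finite
  by (simp add: nn_integral_mu nn_integral_inv_sqrt_height_lambda1)

lemma integrable_inv_sqrt_height: "integrable mu inv_sqrt_height"
  using nn_integral_inv_sqrt_height_mu_finite
  by (intro integrableI_bounded) (auto simp: inv_sqrt_height_nonneg measurable_cong_sets[OF sets_mu refl])

lemma inv_sqrt_height_le_infdist:
  assumes "0 < infdist y segA"
  shows "inv_sqrt_height y \<le> 1 / sqrt (infdist y segA)"
proof (cases "inv_sqrt_height y = 0")
  case False
  then have y: "0 \<le> fst y" "fst y \<le> 1" "0 < snd y" and "inv_sqrt_height y = 1 / sqrt (snd y)"
    by (auto simp: inv_sqrt_height_def split: if_splits)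
  moreover have "infdist y segA \<le> dist y (fst y, 0)"
    using y by (intro infdist_le) (simp add: segA_eq_Times)
  moreover have "dist y (fst y, 0) = snd y"
    using y by (cases y) (simp add: dist_Pair_Pair dist_real_def)
  ultimately show ?thesis
    using assms by (simp add: frac_le)
qed (use assms in simp)

lemma inv_sqrt_height_ge:
  assumes "0 \<le> fst y" "fst y \<le> 1" "0 < snd y" "snd y * q^2 \<le> 1" "1 \<le> q"
  shows "q \<le> inv_sqrt_height y"
proof -
  have "snd y * 1 \<le> snd y * q^2"
    using assms(3,5) by (intro mult_left_mono) auto
  then have "snd y \<le> 1"
    using assms(4) by linarith
  have "sqrt (snd y) * q = sqrt (snd y * q^2)"
    using assms(5) by (simp add: real_sqrt_mult)
  also have "\<dots> \<le> 1"
    using assms(4) by simp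
  finally have "q \<le> 1 / sqrt (snd y)"
    using assms(3) by (simp add: le_divide_eq mult.commute)
  then show ?thesis
    using assms(1-3) \<open>snd y \<le> 1\<close> by (simp add: inv_sqrt_height_def)
qed

lemma maxfun_inv_sqrt_height_finite_off_segA:
  assumes "x \<notin> segA"
  shows "maxfun mu inv_sqrt_height x < \<infinity>"
proof -
  let ?d = "infdist x segA"
  have "0 < ?d"
    using closed_segA assms by (intro infdist_pos_not_in_closed) (auto simp: segA_eq_Times)
  show ?thesis
  proof (rule maxfun_finite_if_locally_bounded)
    show "(\<integral>\<^sup>+ y. ennreal \<bar>inv_sqrt_height y\<bar> \<partial>mu) < \<infinity>"
      using nn_integral_inv_sqrt_height_mu_finite by (simp add: inv_sqrt_height_nonneg)
    show "0 < ?d / 2"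
      using \<open>0 < ?d\<close> by simp
    fix y assume "y \<in> ball x (?d / 2)"
    then have "?d / 2 < infdist y segA"
      using infdist_triangle[of x segA y] by (simp add: dist_commute)
    then have "inv_sqrt_height y \<le> 1 / sqrt (infdist y segA)"
      using \<open>0 < ?d\<close> by (intro inv_sqrt_height_le_infdist) simp
    also have "\<dots> \<le> 1 / sqrt (?d / 2)"
      using \<open>?d / 2 < infdist y segA\<close> \<open>0 < ?d\<close> by (intro divide_left_mono real_sqrt_le_mono) auto
    finally show "\<bar>inv_sqrt_height y\<bar> \<le> 1 / sqrt (?d / 2)"
      by (simp add: inv_sqrt_height_nonneg)
  next
    fix \<rho> :: real assume "0 < \<rho>"
    have "ennreal (pi * \<rho>^2) \<le> emeasure mu (ball c r)" if "\<rho> \<le> r" for c r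
    proof -
      have "pi * \<rho>^2 \<le> pi * r^2"
        using \<open>0 < \<rho>\<close> that by (intro mult_left_mono power_mono) auto
      then show ?thesis
        using \<open>0 < \<rho>\<close> that emeasure_mu_ball_ge[of r c] by (meson ennreal_leI less_imp_le order_trans)
    qed
    then show "\<exists>m>0. \<forall>c r. \<rho> \<le> r \<longrightarrow> ennreal m \<le> emeasure mu (ball c r)"
      using \<open>0 < \<rho>\<close> by (intro exI[of _ "pi * \<rho>^2"]) auto
  qed simp
qed

lemma nn_integral_inv_sqrt_height_ball_ge:
  assumes t: "0 \<le> t" "t \<le> 1" and q: "1 \<le> q" "2 * r * q^2 \<le> 1"
    and r: "0 < r" and h: "r / 2 < h" "h < r"
  shows "ennreal (q * r^2 / 4) \<le> (\<integral>\<^sup>+ y \<in> ball (t, h) r. ennreal \<bar>inv_sqrt_height y\<bar> \<partial>mu)"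
proof -
  define R where "R = {max 0 (t - r/4) .. min 1 (t + r/4)} \<times> {h - r/2 .. h + r/2}"
  have "2 * r * 1 \<le> 2 * r * q^2"
    using q r by (intro mult_left_mono one_le_power) auto
  then have "r \<le> 1/2"
    using q by linarith
  have R_borel: "R \<in> sets borel"
    unfolding R_def by (intro borel_closed closed_Times) auto
  have "(r/4)^2 + (r/2)^2 < r^2"
    using r by (simp add: power_divide)
  then have "{t - r/4 .. t + r/4} \<times> {h - r/2 .. h + r/2} \<subseteq> ball (t, h) r"
    using r by (rule Icc_times_Icc_subset_ball)
  then have R_ball: "R \<subseteq> ball (t, h) r"
    unfolding R_def by (force simp: mem_Times_iff)
  have R_ge: "q \<le> inv_sqrt_height y" if "y \<in> R" for y
  proof (rule inv_sqrt_height_ge)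
    show "0 \<le> fst y" "fst y \<le> 1" "0 < snd y"
      using that h by (auto simp: R_def)
    have "snd y * q^2 \<le> 2 * r * q^2"
      using that h by (intro mult_right_mono) (auto simp: R_def)
    then show "snd y * q^2 \<le> 1"
      using q by linarith
  qed fact
  have "r / 4 \<le> min 1 (t + r/4) - max 0 (t - r/4)"
    using t r \<open>r \<le> 1/2\<close> by (auto simp: min_def max_def)
  then have "ennreal (r^2 / 4) \<le> emeasure lborel R"
    unfolding R_def using r t
    by (subst emeasure_lborel_Icc_times_Icc) (auto simp: power2_eq_square intro!: ennreal_leI)
  also have "\<dots> \<le> emeasure mu R"
    using R_borel by (simp add: emeasure_mu)
  finally have "ennreal q * ennreal (r^2 / 4) \<le> ennreal q * emeasure mu R"
    by (rule mult_left_mono) simp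
  moreover have "ennreal (q * r^2 / 4) = ennreal q * ennreal (r^2 / 4)"
    using q by (subst ennreal_mult[symmetric]) auto
  ultimately have "ennreal (q * r^2 / 4) \<le> ennreal q * emeasure mu R"
    by simp
  also have "\<dots> = (\<integral>\<^sup>+ y. ennreal q * indicator R y \<partial>mu)"
    using R_borel by (simp add: nn_integral_cmult_indicator)
  also have "\<dots> \<le> (\<integral>\<^sup>+ y \<in> ball (t, h) r. ennreal \<bar>inv_sqrt_height y\<bar> \<partial>mu)"
    using R_ball R_ge
    by (intro nn_integral_mono) (auto simp: indicator_def inv_sqrt_height_nonneg intro!: ennreal_leI)
  finally show ?thesis .
qed

lemma sqrt_sq_minus_pow4_bounds:
  fixes r :: real
  assumes "0 < r" "r \<le> 1/2"
  defines "h \<equiv> sqrt (r^2 - r^4)"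
  shows "r / 2 < h" "h < r" "sqrt (r^2 - h^2) = r^2"
proof -
  have "r^2 \<le> (1/2)^2"
    using assms by (intro power_mono) auto
  then have r4: "r^4 < r^2" "r^4 \<le> r^2 / 4"
    using assms(1) by (simp_all add: power4_eq_xxxx power2_eq_square)
  then have h2: "h^2 = r^2 - r^4" and "0 < h"
    by (simp_all add: h_def)
  have "h^2 < r^2"
    using h2 assms(1) by simp
  then show "h < r"
    using assms(1) by (simp add: power_less_imp_less_base)
  have "(r / 2)^2 = r^2 / 4" "0 < r^2"
    using assms(1) by (simp_all add: power_divide)
  then have "(r / 2)^2 < h^2"
    using h2 r4 by linarith
  then show "r / 2 < h"
    using \<open>0 < h\<close> by (metis power_less_imp_less_base less_imp_le)
  show "sqrt (r^2 - h^2) = r^2"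
    using h2 real_sqrt_abs[of "r^2"] by (simp flip: power_mult)
qed

lemma maxfun_inv_sqrt_height_ge_on_segA:
  assumes "x \<in> segA" and "1 \<le> q"
  shows "ennreal (q / 24) \<le> maxfun mu inv_sqrt_height x"
proof -
  obtain t where x: "x = (t, 0)" "0 \<le> t" "t \<le> 1"
    using assms(1) by (auto simp: segA_eq_Times)
  \<comment> \<open>Below height 2 r = 1/q^2 we have f >= q; the centre height h is chosen so that the ball
     passes through x but cuts A in a chord of length 2 sqrt (r^2 - h^2) = 2 r^2.\<close>
  define r where "r = 1 / (2 * q^2)"
  define h where "h = sqrt (r^2 - r^4)"
  have "1 \<le> q^2"
    using assms(2) by (simp add: one_le_power)
  then have r: "0 < r" "2 * r * q^2 = 1" "r \<le> 1/2"
    by (auto simp: r_def divide_le_eq)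
  then have h: "r / 2 < h" "h < r" "sqrt (r^2 - h^2) = r^2"
    unfolding h_def using sqrt_sq_minus_pow4_bounds by auto
  have x_ball: "x \<in> ball (t, h) r"
    using h r by (simp add: x dist_Pair_Pair)
  have "pi * r^2 \<le> 4 * r^2"
    using pi_less_4 by (intro mult_right_mono) auto
  moreover have "emeasure mu (ball (t, h) r) \<le> ennreal (pi * r^2 + 2 * sqrt (r^2 - h^2))"
    using emeasure_mu_ball_le[of "(t, h)" r] h r by simp
  ultimately have upper: "emeasure mu (ball (t, h) r) \<le> ennreal (6 * r^2)"
    using h(3) by (smt (verit) ennreal_leI order_trans)
  have positive: "0 < emeasure mu (ball (t, h) r)"
    using r by (intro less_le_trans[OF _ emeasure_mu_ball_ge[of r]]) auto
  have lower: "ennreal (q * r^2 / 4) \<le> (\<integral>\<^sup>+ y \<in> ball (t, h) r. ennreal \<bar>inv_sqrt_height y\<bar> \<partial>mu)"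
    using x r h assms(2) by (intro nn_integral_inv_sqrt_height_ball_ge) auto
  have "ennreal (q / 24) = ennreal (q * r^2 / 4 / (6 * r^2))"
    using r by simp
  also have "\<dots> \<le> (\<integral>\<^sup>+ y \<in> ball (t, h) r. ennreal \<bar>inv_sqrt_height y\<bar> \<partial>mu) / emeasure mu (ball (t, h) r)"
    using lower upper positive assms(2) by (intro ennreal_divide_ge) auto
  also have "\<dots> \<le> maxfun mu inv_sqrt_height x"
    using x_ball by (rule maxfun_ge_ball_average)
  finally show ?thesis .
qed

lemma maxfun_inv_sqrt_height_eq_top_iff: "maxfun mu inv_sqrt_height x = \<infinity> \<longleftrightarrow> x \<in> segA"
proof
  show "x \<in> segA" if "maxfun mu inv_sqrt_height x = \<infinity>"
  proof (rule ccontr)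
    assume "x \<notin> segA"
    then have "maxfun mu inv_sqrt_height x < \<infinity>"
      by (rule maxfun_inv_sqrt_height_finite_off_segA)
    with that show False
      by simp
  qed
next
  assume "x \<in> segA"
  have unbounded: "of_nat n \<le> maxfun mu inv_sqrt_height x" for n
  proof -
    have "of_nat n = ennreal (real n)"
      by (rule ennreal_of_nat_eq_real_of_nat)
    also have "\<dots> \<le> ennreal (24 * (real n + 1) / 24)"
      by (intro ennreal_leI) simp
    also have "\<dots> \<le> maxfun mu inv_sqrt_height x"
      using \<open>x \<in> segA\<close> by (intro maxfun_inv_sqrt_height_ge_on_segA) auto
    finally show ?thesis .
  qed
  show "maxfun mu inv_sqrt_height x = \<infinity>"
  proof (rule ccontr)
    assume "maxfun mu inv_sqrt_height x \<noteq> \<infinity>"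
    then have "maxfun mu inv_sqrt_height x < top"
      by (simp add: less_top)
    then obtain n where "maxfun mu inv_sqrt_height x < of_nat n"
      using ennreal_Ex_less_of_nat by blast
    then show False
      using unbounded[of n] by (metis leD)
  qed
qed

theorem mainTheorem20:
  shows "(\<exists>f :: real \<times> real \<Rightarrow> real. integrable mu f \<and>
            (\<exists>K. compact K \<and> (\<forall>x. x \<notin> K \<longrightarrow> f x = 0)) \<and>
            {x. maxfun mu f x = \<infinity>} = segA)
         \<and> \<not> dichotomy mu"
proof
  have "compact ({0..1::real} \<times> {0..1::real})"
    by (intro compact_Times compact_Icc)
  moreover have "\<forall>x. x \<notin> {0..1} \<times> {0..1} \<longrightarrow> inv_sqrt_height x = 0"
    by (simp add: inv_sqrt_height_def mem_Times_iff)
  ultimately have support: "\<exists>K. compact K \<and> (\<forall>x. x \<notin> K \<longrightarrow> inv_sqrt_height x = 0)"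
    by blast
  have blowup: "{x. maxfun mu inv_sqrt_height x = \<infinity>} = segA"
    using maxfun_inv_sqrt_height_eq_top_iff by blast
  show "\<exists>f. integrable mu f \<and> (\<exists>K. compact K \<and> (\<forall>x. x \<notin> K \<longrightarrow> f x = 0)) \<and>
            {x. maxfun mu f x = \<infinity>} = segA"
    using integrable_inv_sqrt_height support blowup by blast
  have "\<forall>c r. set_integrable mu (ball c r) inv_sqrt_height"
    unfolding set_integrable_def using integrable_inv_sqrt_height
    by (intro allI integrable_mult_indicator) auto
  moreover have "emeasure mu {x \<in> space mu. maxfun mu inv_sqrt_height x = \<infinity>} \<noteq> 0"
    using blowup emeasure_mu_segA by simp
  moreover have "maxfun mu inv_sqrt_height (2, 0) \<noteq> \<infinity>"
    using maxfun_inv_sqrt_height_eq_top_iff[of "(2, 0)"] by (simp add: segA_eq_Times)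
  ultimately show "\<not> dichotomy mu"
    unfolding dichotomy_def by blast
qed

end
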